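(* Let $K$ be a field of characteristic zero, $(\mathfrak{g},s)$ a finite-dimensional solvable Lie algebra with filtration over $K$, $f\in\mathfrak{g}^*$, and $\pi:\mathfrak{g}^*\to\mathfrak{pv}(f)^*$ the restriction map. Then the $\mathfrak{R}$-equivalence class of $f$ is $\mathfrak{R}(f)=\pi^{-1}\pi(f)=\{g\in\mathfrak{g}^*\mid g|_{\mathfrak{pv}(f)}=f|_{\mathfrak{pv}(f)}\}$; in particular, every $g\in\mathfrak{g}^*$ with $g|_{\mathfrak{pv}(f)}=f|_{\mathfrak{pv}(f)}$ satisfies $\mathfrak{pv}(g)=\mathfrak{pv}(f)$.
   Context: A filtration $s$ on $\mathfrak{g}$ is a chain $\mathfrak{g}=\mathfrak{g}_0\supseteq\mathfrak{g}_1\supseteq\dots\supseteq\mathfrak{g}_k=\{0\}$ of ideals of $\mathfrak{g}$ with $\dim\mathfrak{g}_{i-1}/\mathfrak{g}_i\le1$. For $f\in\mathfrak{g}^*$: $f_i=f|_{\mathfrak{g}_i}$, $\mathfrak{g}_i^{f_i}=\{x\in\mathfrak{g}_i\mid f([x,\mathfrak{g}_i])=0\}$, and $\mathfrak{pv}(f)=\sum_{i=0}^k\mathfrak{g}_i^{f_i}$ is the Vergne polarization. The equivalence relation $\mathfrak{R}$ on $\mathfrak{g}^*$: $f'\,\mathfrak{R}\,f''$ iff $\mathfrak{pv}(f')=\mathfrak{pv}(f'')$ and $f'|_{\mathfrak{pv}(f')}=f''|_{\mathfrak{pv}(f')}$; $\mathfrak{R}(f)$ denotes the class of $f$. *)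

theory Defs
  imports Complex_Main
begin

definition lie_algebra :: "('k::field \<Rightarrow> 'v::ab_group_add \<Rightarrow> 'v) \<Rightarrow> ('v \<Rightarrow> 'v \<Rightarrow> 'v) \<Rightarrow> bool" where
  "lie_algebra scale br \<longleftrightarrow>
     vector_space scale \<and>
     (\<forall>x. Vector_Spaces.linear scale scale (br x)) \<and>
     (\<forall>y. Vector_Spaces.linear scale scale (\<lambda>x. br x y)) \<and>
     (\<forall>x. br x x = 0) \<and>
     (\<forall>x y z. br x (br y z) + br y (br z x) + br z (br x y) = 0)"

definition fin_dim :: "('k::field \<Rightarrow> 'v::ab_group_add \<Rightarrow> 'v) \<Rightarrow> bool" where
  "fin_dim scale \<longleftrightarrow> (\<exists>B. finite B \<and> module.span scale B = UNIV)"

fun derived :: "('k::field \<Rightarrow> 'v::ab_group_add \<Rightarrow> 'v) \<Rightarrow> ('v \<Rightarrow> 'v \<Rightarrow> 'v) \<Rightarrow> nat \<Rightarrow> 'v set" where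
  "derived scale br 0 = UNIV"
| "derived scale br (Suc n) =
     module.span scale {br x y | x y. x \<in> derived scale br n \<and> y \<in> derived scale br n}"

definition solvable :: "('k::field \<Rightarrow> 'v::ab_group_add \<Rightarrow> 'v) \<Rightarrow> ('v \<Rightarrow> 'v \<Rightarrow> 'v) \<Rightarrow> bool" where
  "solvable scale br \<longleftrightarrow> (\<exists>n. derived scale br n = {0})"

definition lie_ideal :: "('k::field \<Rightarrow> 'v::ab_group_add \<Rightarrow> 'v) \<Rightarrow> ('v \<Rightarrow> 'v \<Rightarrow> 'v) \<Rightarrow> 'v set \<Rightarrow> bool" where
  "lie_ideal scale br I \<longleftrightarrow> module.subspace scale I \<and> (\<forall>x y. y \<in> I \<longrightarrow> br x y \<in> I)"

definition filtration :: "('k::field \<Rightarrow> 'v::ab_group_add \<Rightarrow> 'v) \<Rightarrow> ('v \<Rightarrow> 'v \<Rightarrow> 'v) \<Rightarrow> (nat \<Rightarrow> 'v set) \<Rightarrow> nat \<Rightarrow> bool" where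
  "filtration scale br gs k \<longleftrightarrow>
     gs 0 = UNIV \<and> gs k = {0} \<and>
     (\<forall>i\<le>k. lie_ideal scale br (gs i)) \<and>
     (\<forall>i<k. gs (Suc i) \<subseteq> gs i \<and>
            vector_space.dim scale (gs i) \<le> vector_space.dim scale (gs (Suc i)) + 1)"

definition dual :: "('k::field \<Rightarrow> 'v::ab_group_add \<Rightarrow> 'v) \<Rightarrow> ('v \<Rightarrow> 'k) set" where
  "dual scale = {f. Vector_Spaces.linear scale (*) f}"

definition stab :: "('v \<Rightarrow> 'v \<Rightarrow> 'v) \<Rightarrow> 'v set \<Rightarrow> ('v \<Rightarrow> 'k::field) \<Rightarrow> 'v set" where
  "stab br G f = {x \<in> G. \<forall>y\<in>G. f (br x y) = 0}"

text \<open>Vergne polarization: pv(f) = sum_{i=0}^k g_i^{f_i} (sum of subspaces = span of union).\<close>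
definition pv :: "('k::field \<Rightarrow> 'v::ab_group_add \<Rightarrow> 'v) \<Rightarrow> ('v \<Rightarrow> 'v \<Rightarrow> 'v) \<Rightarrow> (nat \<Rightarrow> 'v set) \<Rightarrow> nat \<Rightarrow> ('v \<Rightarrow> 'k) \<Rightarrow> 'v set" where
  "pv scale br gs k f = module.span scale (\<Union>i\<in>{0..k}. stab br (gs i) f)"

definition relR :: "('k::field \<Rightarrow> 'v::ab_group_add \<Rightarrow> 'v) \<Rightarrow> ('v \<Rightarrow> 'v \<Rightarrow> 'v) \<Rightarrow> (nat \<Rightarrow> 'v set) \<Rightarrow> nat \<Rightarrow> ('v \<Rightarrow> 'k) \<Rightarrow> ('v \<Rightarrow> 'k) \<Rightarrow> bool" where
  "relR scale br gs k f' f'' \<longleftrightarrow>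
     pv scale br gs k f' = pv scale br gs k f'' \<and> (\<forall>x\<in>pv scale br gs k f'. f' x = f'' x)"

definition classR :: "('k::field \<Rightarrow> 'v::ab_group_add \<Rightarrow> 'v) \<Rightarrow> ('v \<Rightarrow> 'v \<Rightarrow> 'v) \<Rightarrow> (nat \<Rightarrow> 'v set) \<Rightarrow> nat \<Rightarrow> ('v \<Rightarrow> 'k) \<Rightarrow> ('v \<Rightarrow> 'k) set" where
  "classR scale br gs k f = {g \<in> dual scale. relR scale br gs k g f}"

end

theory Submission
  imports Defs
begin

(* Fix the filtration g = g_0 >= ... >= g_k = 0 and, for a
   functional f, write S_i(f) for the stabiliser g_i^{f_i} and
   P_i(f) = S_i(f) + ... + S_k(f) for the Vergne polarization of f_i relative to the
   truncated filtration g_i >= ... >= g_k; thus pv(f) = P_0(f).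
   The central fact is that P_i(f) is coisotropic in g_i: every w in g_i with
   f([w, P_{i+1}(f)]) = 0 already lies in P_i(f).  It is proved by downward induction
   on i, using that g_{i+1} has codimension <= 1 in g_i and, when S_i(f) is contained in
   g_{i+1}, a representation of the functional f([w, -]) on g_{i+1} by an element of
   g_{i+1} (finite-dimensional linear algebra).
   From coisotropy, again by downward induction, P_i(g) = P_i(f) whenever g agrees with
   f on P_i(f). *)

locale filtered_lie_algebra = finite_dimensional_vector_space scale Basis
  for scale :: "'k::field \<Rightarrow> 'v::ab_group_add \<Rightarrow> 'v" and Basis :: "'v set" +
  fixes br :: "'v \<Rightarrow> 'v \<Rightarrow> 'v" and gs :: "nat \<Rightarrow> 'v set" and k :: nat
  assumes br_add_left: "br (x + y) z = br x z + br y z"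
    and br_add_right: "br x (y + z) = br x y + br x z"
    and br_scale_left: "br (scale c x) y = scale c (br x y)"
    and br_scale_right: "br x (scale c y) = scale c (br x y)"
    and br_self: "br x x = 0"
    and jacobi: "br x (br y z) + br y (br z x) + br z (br x y) = 0"
    and gs_last: "gs k = {0}"
    and gs_subspace: "i \<le> k \<Longrightarrow> subspace (gs i)"
    and gs_ideal: "i \<le> k \<Longrightarrow> y \<in> gs i \<Longrightarrow> br x y \<in> gs i"
    and gs_step: "i < k \<Longrightarrow> gs (Suc i) \<subseteq> gs i"
    and gs_codim: "i < k \<Longrightarrow> dim (gs i) \<le> dim (gs (Suc i)) + 1"
begin

lemma br_zero_left [simp]: "br 0 y = 0"
  using br_add_left[of 0 0 y] by simp

lemma br_zero_right [simp]: "br x 0 = 0"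
  using br_add_right[of x 0 0] by simp

lemma br_diff_left: "br (x - y) z = br x z - br y z"
  using br_add_left[of "x - y" y z] by (simp add: algebra_simps)

lemma br_diff_right: "br x (y - z) = br x y - br x z"
  using br_add_right[of x "y - z" z] by (simp add: algebra_simps)

lemma br_antisym: "br x y = - br y x"
proof -
  have "br (x + y) (x + y) = br x x + br x y + (br y x + br y y)"
    by (simp add: br_add_left br_add_right ac_simps)
  then have "br x y + br y x = 0" by (simp add: br_self)
  then show ?thesis by (simp add: eq_neg_iff_add_eq_0)
qed

definition functional :: "('v \<Rightarrow> 'k) \<Rightarrow> bool" where
  "functional f \<longleftrightarrow> (\<forall>x y. f (x + y) = f x + f y) \<and> (\<forall>c x. f (scale c x) = c * f x)"

lemma functional_add: "functional f \<Longrightarrow> f (x + y) = f x + f y"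
  by (simp add: functional_def)

lemma functional_scale: "functional f \<Longrightarrow> f (scale c x) = c * f x"
  by (simp add: functional_def)

lemma functional_zero: "functional f \<Longrightarrow> f 0 = 0"
  using functional_scale[of f 0 0] by simp

lemma functional_diff: "functional f \<Longrightarrow> f (x - y) = f x - f y"
  using functional_add[of f "x - y" y] by simp

lemma functional_neg: "functional f \<Longrightarrow> f (- x) = - f x"
  using functional_diff[of f 0 x] functional_zero[of f] by simp

lemma functional_br_sum:
  assumes f: "functional f" and fin: "finite A"
  shows "f (br (\<Sum>a\<in>A. scale (c a) (v a)) u) = (\<Sum>a\<in>A. c a * f (br (v a) u))"
  using fin
  by (induction A rule: finite_induct)
    (simp_all add: functional_zero[OF f] br_add_left br_scale_left
      functional_add[OF f] functional_scale[OF f])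

lemma functional_br_span:
  assumes f: "functional f" and y: "y \<in> span B" and vanish: "\<forall>b\<in>B. f (br b u) = 0"
  shows "f (br y u) = 0"
  using y
proof (induction rule: span_induct_alt)
  case base
  then show ?case by (simp add: functional_zero[OF f])
next
  case (step c x y)
  then show ?case
    using vanish by (simp add: br_add_left br_scale_left functional_add[OF f] functional_scale[OF f])
qed

subsection \<open>Linear algebra\<close>

lemma functional_combination_extend:
  assumes phi0: "functional \<phi>0" and psi: "functional \<psi>" and phi: "\<forall>i\<in>I. functional (\<phi> i)"
    and U: "subspace U" and u0: "u0 \<in> U" "\<phi>0 u0 \<noteq> 0"
    and c: "\<forall>u\<in>U. \<phi>0 u = 0 \<longrightarrow> \<psi> u = (\<Sum>i\<in>I. c i * \<phi> i u)"
  shows "\<exists>a. \<forall>u\<in>U. \<psi> u = a * \<phi>0 u + (\<Sum>i\<in>I. c i * \<phi> i u)"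
proof -
  define a where "a = (\<psi> u0 - (\<Sum>i\<in>I. c i * \<phi> i u0)) / \<phi>0 u0"
  have "\<psi> u = a * \<phi>0 u + (\<Sum>i\<in>I. c i * \<phi> i u)" if u: "u \<in> U" for u
  proof -
    \<comment> \<open>Split u as (u - t u0) + t u0 with u - t u0 in the kernel of \<phi>0.\<close>
    define t where "t = \<phi>0 u / \<phi>0 u0"
    have "u - scale t u0 \<in> U" "\<phi>0 (u - scale t u0) = 0"
      using u u0 U by (simp_all add: subspace_diff subspace_scale functional_diff[OF phi0]
          functional_scale[OF phi0] t_def)
    then have "\<psi> (u - scale t u0) = (\<Sum>i\<in>I. c i * \<phi> i (u - scale t u0))"
      using c by blast
    moreover have "(\<Sum>i\<in>I. c i * \<phi> i (u - scale t u0))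
        = (\<Sum>i\<in>I. c i * \<phi> i u) - t * (\<Sum>i\<in>I. c i * \<phi> i u0)"
      using phi by (simp add: functional_diff functional_scale algebra_simps
          sum_subtractf sum_distrib_left cong: sum.cong)
    ultimately have "\<psi> u - t * \<psi> u0 = (\<Sum>i\<in>I. c i * \<phi> i u) - t * (\<Sum>i\<in>I. c i * \<phi> i u0)"
      by (simp add: functional_diff[OF psi] functional_scale[OF psi])
    moreover have "t * (\<psi> u0 - (\<Sum>i\<in>I. c i * \<phi> i u0)) = a * \<phi>0 u"
      using u0 by (simp add: t_def a_def field_simps)
    ultimately show ?thesis by (simp add: algebra_simps)
  qed
  then show ?thesis by blast
qed

lemma functional_combination:
  assumes "finite I"
  shows "(\<forall>i\<in>I. functional (\<phi> i)) \<Longrightarrow> functional \<psi> \<Longrightarrow> subspace U \<Longrightarrow>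
    (\<forall>u\<in>U. (\<forall>i\<in>I. \<phi> i u = 0) \<longrightarrow> \<psi> u = 0) \<Longrightarrow>
    \<exists>c. \<forall>u\<in>U. \<psi> u = (\<Sum>i\<in>I. c i * \<phi> i u)"
  using assms
proof (induction I arbitrary: U rule: finite_induct)
  case empty
  then show ?case by simp
next
  case (insert j I U)
  have phi: "functional (\<phi> i)" if "i \<in> insert j I" for i
    using insert.prems that by blast
  show ?case
  proof (cases "\<forall>u\<in>U. \<phi> j u = 0")
    case True
    then have "\<forall>u\<in>U. (\<forall>i\<in>I. \<phi> i u = 0) \<longrightarrow> \<psi> u = 0"
      using insert.prems(4) by auto
    then obtain c where c: "\<forall>u\<in>U. \<psi> u = (\<Sum>i\<in>I. c i * \<phi> i u)"
      using insert.IH insert.prems by blast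
    show ?thesis
      by (rule exI[of _ c]) (use c True insert.hyps in simp)
  next
    case False
    then obtain u0 where u0: "u0 \<in> U" "\<phi> j u0 \<noteq> 0" by blast
    define U' where "U' = {u \<in> U. \<phi> j u = 0}"
    have "subspace U'"
      using insert.prems(3) functional_add[OF phi] functional_scale[OF phi] functional_zero[OF phi]
      unfolding U'_def subspace_def by auto
    moreover have "\<forall>u\<in>U'. (\<forall>i\<in>I. \<phi> i u = 0) \<longrightarrow> \<psi> u = 0"
      using insert.prems unfolding U'_def by auto
    ultimately obtain c where "\<forall>u\<in>U'. \<psi> u = (\<Sum>i\<in>I. c i * \<phi> i u)"
      using insert.IH insert.prems by blast
    then have "\<forall>u\<in>U. \<phi> j u = 0 \<longrightarrow> \<psi> u = (\<Sum>i\<in>I. c i * \<phi> i u)"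
      unfolding U'_def by blast
    moreover have "\<forall>i\<in>I. functional (\<phi> i)" using phi by blast
    ultimately obtain a where a: "\<forall>u\<in>U. \<psi> u = a * \<phi> j u + (\<Sum>i\<in>I. c i * \<phi> i u)"
      using functional_combination_extend[OF phi insert.prems(2) _ insert.prems(3) u0] by blast
    have "(\<Sum>i\<in>I. (c(j := a)) i * \<phi> i u) = (\<Sum>i\<in>I. c i * \<phi> i u)" for u
      using insert.hyps by (intro sum.cong) auto
    then show ?thesis
      using a insert.hyps by (intro exI[of _ "c(j := a)"]) simp
  qed
qed

lemma functional_by_bracket:
  assumes f: "functional f" and psi: "functional \<psi>" and U: "subspace U"
    and vanish: "\<forall>u\<in>U. (\<forall>y\<in>U. f (br y u) = 0) \<longrightarrow> \<psi> u = 0"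
  shows "\<exists>y\<in>U. \<forall>u\<in>U. \<psi> u = f (br y u)"
proof -
  obtain B where B: "finite B" "B \<subseteq> U" "span B = U"
    using basis_subspace_exists[OF U] by metis
  have "functional (\<lambda>u. f (br b u))" for b
    by (simp add: functional_def br_add_right br_scale_right functional_add[OF f]
        functional_scale[OF f])
  moreover have "\<forall>u\<in>U. (\<forall>b\<in>B. f (br b u) = 0) \<longrightarrow> \<psi> u = 0"
    using vanish functional_br_span[OF f] B(3) by blast
  ultimately obtain c where c: "\<forall>u\<in>U. \<psi> u = (\<Sum>b\<in>B. c b * f (br b u))"
    using functional_combination[OF B(1), of "\<lambda>b u. f (br b u)" \<psi> U] psi U by blast
  define y where "y = (\<Sum>b\<in>B. scale (c b) b)"
  have "y \<in> U"
    unfolding y_def using B(2) by (intro subspace_sum[OF U] subspace_scale[OF U]) blast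
  moreover have "\<psi> u = f (br y u)" if "u \<in> U" for u
    using c that unfolding y_def by (simp add: functional_br_sum[OF f B(1)])
  ultimately show ?thesis by blast
qed

lemma codim_one:
  assumes i: "i < k" and w: "w \<in> gs i" "w \<notin> gs (Suc i)" and v: "v \<in> gs i"
  shows "\<exists>c. v - scale c w \<in> gs (Suc i)"
proof -
  have S: "subspace (gs (Suc i))" and S': "subspace (gs i)"
    using gs_subspace i by simp_all
  have "w \<notin> span (gs (Suc i))" using w S by (metis span_eq_iff)
  then have "dim (insert w (gs (Suc i))) = dim (gs (Suc i)) + 1" by (simp add: dim_insert)
  moreover have "insert w (gs (Suc i)) \<subseteq> gs i" using w gs_step i by blast
  ultimately have "span (insert w (gs (Suc i))) = span (gs i)"
    using dim_eq_span gs_codim[OF i] by simp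
  then have "v \<in> span (insert w (gs (Suc i)))" using v span_superset by blast
  then obtain c where "v - scale c w \<in> span (gs (Suc i))" by (auto simp: span_breakdown_eq)
  then show ?thesis using S by (metis span_eq_iff)
qed

lemma gs_antimono: "i \<le> j \<Longrightarrow> j \<le> k \<Longrightarrow> gs j \<subseteq> gs i"
proof (induction j)
  case (Suc j)
  then show ?case
    by (metis Suc_le_eq gs_step le_Suc_eq less_imp_le_nat order_refl order_trans)
qed simp

definition stab_at :: "nat \<Rightarrow> ('v \<Rightarrow> 'k) \<Rightarrow> 'v set" where
  "stab_at i f = stab br (gs i) f"

definition pv_from :: "nat \<Rightarrow> ('v \<Rightarrow> 'k) \<Rightarrow> 'v set" where
  "pv_from i f = span (\<Union>j\<in>{i..k}. stab_at j f)"

lemma stab_at_iff: "x \<in> stab_at i f \<longleftrightarrow> x \<in> gs i \<and> (\<forall>y\<in>gs i. f (br x y) = 0)"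
  by (simp add: stab_at_def stab_def)

lemma stab_at_subset: "stab_at i f \<subseteq> gs i"
  by (auto simp: stab_at_iff)

lemma stab_at_subset_pv_from: "i \<le> k \<Longrightarrow> stab_at i f \<subseteq> pv_from i f"
  unfolding pv_from_def using span_superset by fastforce

lemma pv_from_subset:
  assumes "i \<le> k"
  shows "pv_from i f \<subseteq> gs i"
proof -
  have "stab_at j f \<subseteq> gs i" if "j \<in> {i..k}" for j
    using that stab_at_subset[of j f] gs_antimono[of i j] by auto
  then show ?thesis
    unfolding pv_from_def using gs_subspace[OF assms] by (intro span_minimal UN_least) auto
qed

lemma pv_from_mono: "pv_from (Suc i) f \<subseteq> pv_from i f"
  unfolding pv_from_def by (intro span_mono UN_mono) auto

lemma pv_from_step:
  assumes "i < k"
  shows "pv_from i f = span (stab_at i f \<union> pv_from (Suc i) f)"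
proof -
  have "(\<Union>j\<in>{i..k}. stab_at j f) = stab_at i f \<union> (\<Union>j\<in>{Suc i..k}. stab_at j f)"
    using assms by (simp add: atLeastAtMost_insertL[symmetric])
  moreover have "span (A \<union> span B) = span (A \<union> B)" for A B
    by (simp only: span_Un span_span)
  ultimately show ?thesis unfolding pv_from_def by simp
qed

lemma pv_from_last: "pv_from k f = {0}"
proof -
  have "span (stab_at k f) \<subseteq> span {0}"
    using stab_at_subset gs_last by (intro span_mono) blast
  then show ?thesis by (auto simp: pv_from_def span_zero)
qed

lemma stab_at_bracket:
  assumes f: "functional f" and il: "i \<le> l" and lk: "l \<le> k"
    and x: "x \<in> stab_at i f" and z: "z \<in> stab_at l f"
  shows "br x z \<in> stab_at l f"
proof -
  have zl: "z \<in> gs l" using z stab_at_subset by blast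
  have "f (br (br x z) u) = 0" if u: "u \<in> gs l" for u
  proof -
    have "br (br x z) u = - br u (br x z)" by (rule br_antisym)
    also have "\<dots> = br x (br z u) + br z (br u x)"
      using jacobi[of x z u] by (metis add_eq_0_iff minus_minus)
    finally have expand: "br (br x z) u = br x (br z u) + br z (br u x)" .
    have "f (br x (br z u)) = 0"
      using x gs_ideal[OF lk u, of z] gs_antimono[OF il lk] by (auto simp: stab_at_iff)
    moreover have "br u x \<in> gs l"
      using gs_ideal[OF lk u, of x] br_antisym[of u x] subspace_neg[OF gs_subspace[OF lk]] by metis
    then have "f (br z (br u x)) = 0" using z by (auto simp: stab_at_iff)
    ultimately show ?thesis using expand functional_add[OF f] by simp
  qed
  then show ?thesis using gs_ideal[OF lk zl] by (simp add: stab_at_iff)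
qed

lemma pv_from_bracket:
  assumes f: "functional f" and i: "i < k"
    and x: "x \<in> stab_at i f" and z: "z \<in> pv_from (Suc i) f"
  shows "br x z \<in> pv_from (Suc i) f"
  using z unfolding pv_from_def
proof (induction rule: span_induct_alt)
  case base
  then show ?case by (simp add: span_zero)
next
  case (step c a y)
  then obtain l where l: "l \<in> {Suc i..k}" "a \<in> stab_at l f" by blast
  then have "br x a \<in> stab_at l f" using stab_at_bracket[OF f _ _ x] by simp
  then have "br x a \<in> span (\<Union>j\<in>{Suc i..k}. stab_at j f)"
    using l(1) by (blast intro: span_base)
  then show ?case
    using step by (simp add: br_add_right br_scale_right span_add span_scale)
qed

subsection \<open>Coisotropy of the partial polarizations\<close>

text \<open>If S_i(f) \<subseteq> g_{i+1}, then no w \<in> g_i - g_{i+1} is f-orthogonal to S_{i+1}(f):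
  otherwise w could be corrected by an element of g_{i+1} into an element of S_i(f)
  outside g_{i+1}.\<close>

lemma stab_at_escapes:
  assumes f: "functional f" and i: "i < k" and small: "stab_at i f \<subseteq> gs (Suc i)"
    and w: "w \<in> gs i" "w \<notin> gs (Suc i)" and orth: "\<forall>z\<in>stab_at (Suc i) f. f (br w z) = 0"
  shows False
proof -
  let ?U = "gs (Suc i)"
  have U: "subspace ?U" using gs_subspace i by simp
  have "functional (\<lambda>u. f (br w u))"
    by (simp add: functional_def br_add_right br_scale_right functional_add[OF f]
        functional_scale[OF f])
  moreover have "\<forall>u\<in>?U. (\<forall>y\<in>?U. f (br y u) = 0) \<longrightarrow> f (br w u) = 0"
  proof (intro ballI impI)
    fix u assume u: "u \<in> ?U" and rad: "\<forall>y\<in>?U. f (br y u) = 0"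
    have "f (br u y) = 0" if "y \<in> ?U" for y
      using rad that br_antisym[of u y] functional_neg[OF f] by simp
    then show "f (br w u) = 0" using orth u by (simp add: stab_at_iff)
  qed
  ultimately obtain y where y: "y \<in> ?U" "\<forall>u\<in>?U. f (br w u) = f (br y u)"
    using functional_by_bracket[OF f _ U] by blast
  define x where "x = w - y"
  have xi: "x \<in> gs i"
    unfolding x_def using w y gs_step[OF i] gs_subspace i by (auto intro: subspace_diff)
  have xn: "x \<notin> ?U"
    using w y U unfolding x_def by (metis diff_add_cancel subspace_add)
  have "f (br x v) = 0" if v: "v \<in> gs i" for v
  proof -
    obtain d where d: "v - scale d x \<in> ?U" using codim_one[OF i xi xn v] by blast
    have "br x v = br x (v - scale d x) + scale d (br x x)"
      by (simp add: br_diff_right br_scale_right)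
    then show ?thesis
      using y(2) d by (simp add: x_def br_self br_diff_left functional_add[OF f]
          functional_diff[OF f] functional_scale[OF f] functional_zero[OF f])
  qed
  then have "x \<in> stab_at i f" using xi by (simp add: stab_at_iff)
  then show False using small xn by blast
qed

lemma pv_from_coisotropic:
  assumes "i \<le> k"
  shows "\<forall>f w. functional f \<longrightarrow> w \<in> gs i \<longrightarrow> (\<forall>z\<in>pv_from (Suc i) f. f (br w z) = 0)
           \<longrightarrow> w \<in> pv_from i f"
  using assms
proof (induction i rule: inc_induct)
  case base
  then show ?case using gs_last by (auto simp: pv_from_def span_zero)
next
  case (step i)
  show ?case
  proof (intro allI impI)
    fix f w
    assume f: "functional f" and w: "w \<in> gs i"
      and orth: "\<forall>z\<in>pv_from (Suc i) f. f (br w z) = 0"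
    have i: "i < k" using step.hyps(2) .
    have orth': "\<forall>z\<in>pv_from (Suc (Suc i)) f. f (br w z) = 0"
      using orth pv_from_mono by blast
    show "w \<in> pv_from i f"
    proof (cases "w \<in> gs (Suc i)")
      case True
      then show ?thesis using step.IH f orth' pv_from_mono by blast
    next
      case wn: False
      show ?thesis
      proof (cases "stab_at i f \<subseteq> gs (Suc i)")
        case True
        then show ?thesis
          using stab_at_escapes[OF f i True w wn] orth stab_at_subset_pv_from[of "Suc i" f] i
          by auto
      next
        case False
        then obtain x where x: "x \<in> stab_at i f" "x \<notin> gs (Suc i)" by blast
        obtain c where c: "w - scale c x \<in> gs (Suc i)"
          using codim_one[OF i _ x(2) w] x(1) stab_at_subset by blast
        have "\<forall>z\<in>pv_from (Suc (Suc i)) f. f (br x z) = 0"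
          using x(1) pv_from_mono pv_from_subset[of "Suc i" f] i gs_step[OF i]
          by (force simp: stab_at_iff)
        then have "\<forall>z\<in>pv_from (Suc (Suc i)) f. f (br (w - scale c x) z) = 0"
          using orth' by (simp add: br_diff_left br_scale_left functional_diff[OF f]
              functional_scale[OF f])
        then have "w - scale c x \<in> pv_from i f"
          using step.IH f c pv_from_mono by blast
        moreover have "scale c x \<in> pv_from i f"
          using x(1) stab_at_subset_pv_from[of i f] i
          unfolding pv_from_def by (auto intro: span_scale)
        ultimately show ?thesis
          unfolding pv_from_def by (metis diff_add_cancel span_add)
      qed
    qed
  qed
qed

subsection \<open>The polarization depends only on the restriction of the functional\<close>

text \<open>One step of the downward induction: if f and g agree on P_{i+1}(f) = P_{i+1}(g),
  then S_i(g) is f-orthogonal to P_{i+1}(f), hence contained in P_i(f).\<close>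

lemma stab_at_subset_pv_from_other:
  assumes f: "functional f" and g: "functional g" and i: "i < k"
    and same: "pv_from (Suc i) g = pv_from (Suc i) f"
    and agree: "\<forall>x\<in>pv_from (Suc i) f. g x = f x"
  shows "pv_from i g \<subseteq> pv_from i f"
proof -
  have "stab_at i g \<subseteq> pv_from i f"
  proof
    fix x assume x: "x \<in> stab_at i g"
    have "\<forall>z\<in>pv_from (Suc i) f. f (br x z) = 0"
    proof
      fix z assume z: "z \<in> pv_from (Suc i) f"
      have "br x z \<in> pv_from (Suc i) f"
        using pv_from_bracket[OF g i x] z same by simp
      then have "f (br x z) = g (br x z)" using agree by simp
      also have "\<dots> = 0"
        using x z pv_from_subset[of "Suc i" f] i gs_step[OF i] by (auto simp: stab_at_iff)
      finally show "f (br x z) = 0" .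
    qed
    moreover have "x \<in> gs i" using x stab_at_subset by blast
    ultimately show "x \<in> pv_from i f"
      using pv_from_coisotropic[OF less_imp_le[OF i]] f by blast
  qed
  moreover have "pv_from (Suc i) g \<subseteq> pv_from i f" using same pv_from_mono by simp
  ultimately have "stab_at i g \<union> pv_from (Suc i) g \<subseteq> pv_from i f" by blast
  then show ?thesis
    unfolding pv_from_step[OF i, of g] by (rule span_minimal) (simp add: pv_from_def)
qed

lemma pv_from_restriction:
  assumes "i \<le> k"
  shows "\<forall>f g. functional f \<longrightarrow> functional g \<longrightarrow> (\<forall>x\<in>pv_from i f. g x = f x)
           \<longrightarrow> pv_from i g = pv_from i f"
  using assms
proof (induction i rule: inc_induct)
  case base
  then show ?case by (simp add: pv_from_last)
next
  case (step i)
  show ?case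
  proof (intro allI impI)
    fix f g
    assume f: "functional f" and g: "functional g" and agree: "\<forall>x\<in>pv_from i f. g x = f x"
    have i: "i < k" using step.hyps(2) .
    have agree': "\<forall>x\<in>pv_from (Suc i) f. g x = f x" using agree pv_from_mono by blast
    then have same: "pv_from (Suc i) g = pv_from (Suc i) f" using step.IH f g by blast
    show "pv_from i g = pv_from i f"
      using stab_at_subset_pv_from_other[OF f g i same agree']
        stab_at_subset_pv_from_other[OF g f i same[symmetric]] agree' same
      by (simp add: subset_antisym)
  qed
qed

end

lemma filtered_lie_algebra_of_defs:
  fixes scale :: "'k::field \<Rightarrow> 'v::ab_group_add \<Rightarrow> 'v"
  assumes lie: "lie_algebra scale br" and fin: "fin_dim scale"
    and filt: "filtration scale br gs k"
  shows "\<exists>B. filtered_lie_algebra scale B br gs k"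
proof -
  have vs: "vector_space scale" using lie by (simp add: lie_algebra_def)
  then interpret vector_space scale .
  obtain B where B: "finite B" "span B = UNIV" using fin by (auto simp: fin_dim_def)
  obtain B' where B': "B' \<subseteq> B" "independent B'" "B \<subseteq> span B'"
    using maximal_independent_subset[of B] by blast
  have "span B' = UNIV" using B(2) B'(3) span_mono span_span by blast
  then have "finite_dimensional_vector_space scale B'"
    using B(1) B' finite_subset
    by unfold_locales (auto simp: finite_dimensional_vector_space_axioms_def)
  then show ?thesis
    using lie filt unfolding filtered_lie_algebra_def filtered_lie_algebra_axioms_def
      lie_algebra_def filtration_def lie_ideal_def
    by (auto simp: Vector_Spaces.linear_iff)
qed

theorem theorem3p7:
  fixes scale :: "'k::field_char_0 \<Rightarrow> 'v::ab_group_add \<Rightarrow> 'v"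
    and br :: "'v \<Rightarrow> 'v \<Rightarrow> 'v"
    and gs :: "nat \<Rightarrow> 'v set" and k :: nat
    and f :: "'v \<Rightarrow> 'k"
  assumes "lie_algebra scale br"
    and "fin_dim scale"
    and "solvable scale br"
    and "filtration scale br gs k"
    and "f \<in> dual scale"
  shows "classR scale br gs k f =
           {g \<in> dual scale. \<forall>x\<in>pv scale br gs k f. g x = f x}
         \<and> (\<forall>g\<in>dual scale. (\<forall>x\<in>pv scale br gs k f. g x = f x)
               \<longrightarrow> pv scale br gs k g = pv scale br gs k f)"
proof -
  obtain B where "filtered_lie_algebra scale B br gs k"
    using filtered_lie_algebra_of_defs assms(1,2,4) by blast
  then interpret filtered_lie_algebra scale B br gs k .
  have dual: "functional g" if "g \<in> dual scale" for g
    using that by (simp add: dual_def Vector_Spaces.linear_iff functional_def)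
  have pv: "pv scale br gs k g = pv_from 0 g" for g
    by (simp add: pv_def pv_from_def stab_at_def)
  have "pv scale br gs k g = pv scale br gs k f"
    if "g \<in> dual scale" "\<forall>x\<in>pv scale br gs k f. g x = f x" for g
    using pv_from_restriction[of 0] dual[OF that(1)] dual[OF assms(5)] that(2)
    unfolding pv by blast
  then show ?thesis
    unfolding classR_def relR_def by auto
qed

end
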